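(* The value of the problem (RE) — maximize $\phi_t+\phi_d(1-G(\tau))$ over all $(G,\phi,\tau)$ with $G$ a distribution on $[\underline{\theta},\overline{\theta}]$, $\phi=(\phi_t,\phi_d)\in\mathbb{R}^2$, $\tau\in\mathbb{R}$, subject to (w-P), (w-HE) and $E_G[s]=\mu$ — equals $(\overline{\theta}-\mu)\big(1-e^{(\underline{\theta}-\mu)/(\overline{\theta}-\mu)}\big)$, and it has a unique solution, given by $\phi_t^*=0$, $\phi_d^*=\overline{\theta}-\mu$, and $G^*(s)=e^{(\underline{\theta}-\mu)/(\overline{\theta}-\mu)}$ for $s\in[\underline{\theta},\underline{\theta}+\overline{\theta}-\mu)$, $G^*(s)=e^{(s-\overline{\theta})/(\overline{\theta}-\mu)}$ for $s\in[\underline{\theta}+\overline{\theta}-\mu,\overline{\theta}]$.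
   Context: $F$ is a distribution with lowest and highest support points $0\le\underline{\theta}<\overline{\theta}<\infty$ and mean $\mu$. For a CDF $G$ on $[\underline{\theta},\overline{\theta}]$ and fees $(\phi_t,\phi_d)$: (w-P) means $\phi_t\le\int_{\mu+\phi_d}^{\overline{\theta}}[s-(\mu+\phi_d)]dG(s)$; (w-HE) for a threshold $\tau$ means $\tau-\phi_d=E_G[s\mid s\le\tau]$ and $\tau'-\phi_d\ge E_G[s\mid s\le\tau']$ for all $\tau'>\tau$. *)

theory Defs
  imports "HOL-Probability.Probability"
begin

text \<open>A distribution on the reals (Borel probability measure) concentrated on [a,b].
  Its CDF is the library's cdf G s = measure G {..s}.\<close>
definition dist_on :: "real measure \<Rightarrow> real \<Rightarrow> real \<Rightarrow> bool" where
  "dist_on G a b \<longleftrightarrow> prob_space G \<and> sets G = sets borel \<and> measure G {a..b} = 1"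

definition support_bounds :: "real measure \<Rightarrow> real \<Rightarrow> real \<Rightarrow> bool" where
  "support_bounds F lo hi \<longleftrightarrow> dist_on F lo hi
     \<and> (\<forall>e>0. measure F {..<lo + e} > 0) \<and> (\<forall>e>0. measure F {hi - e<..} > 0)"

definition cond_mean_le :: "real measure \<Rightarrow> real \<Rightarrow> real" where
  "cond_mean_le G t = (LINT s:{..t}|G. s) / cdf G t"

definition wP :: "real \<Rightarrow> real \<Rightarrow> real measure \<Rightarrow> real \<Rightarrow> real \<Rightarrow> bool" where
  "wP hi \<mu> G \<phi>t \<phi>d \<longleftrightarrow> \<phi>t \<le> (LINT s:{\<mu> + \<phi>d..hi}|G. s - (\<mu> + \<phi>d))"

text \<open>(w-HE) for threshold tau; the conditional expectation must be defined, i.e. G(tau) > 0.\<close>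
definition wHE :: "real measure \<Rightarrow> real \<Rightarrow> real \<Rightarrow> bool" where
  "wHE G \<phi>d \<tau> \<longleftrightarrow> cdf G \<tau> > 0 \<and> \<tau> - \<phi>d = cond_mean_le G \<tau>
     \<and> (\<forall>\<tau>'>\<tau>. \<tau>' - \<phi>d \<ge> cond_mean_le G \<tau>')"

definition RE_feasible :: "real \<Rightarrow> real \<Rightarrow> real \<Rightarrow> real measure \<Rightarrow> real \<Rightarrow> real \<Rightarrow> real \<Rightarrow> bool" where
  "RE_feasible lo hi \<mu> G \<phi>t \<phi>d \<tau> \<longleftrightarrow>
     dist_on G lo hi \<and> wP hi \<mu> G \<phi>t \<phi>d \<and> wHE G \<phi>d \<tau> \<and> (LINT s|G. s) = \<mu>"

definition RE_obj :: "real measure \<Rightarrow> real \<Rightarrow> real \<Rightarrow> real \<Rightarrow> real" where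
  "RE_obj G \<phi>t \<phi>d \<tau> = \<phi>t + \<phi>d * (1 - cdf G \<tau>)"

definition G_star :: "real \<Rightarrow> real \<Rightarrow> real \<Rightarrow> real \<Rightarrow> real" where
  "G_star lo hi \<mu> s = (if s < lo + hi - \<mu> then exp ((lo - \<mu>) / (hi - \<mu>))
                       else exp ((s - hi) / (hi - \<mu>)))"

end

theory Submission
  imports Defs
begin

(* Let H(t) = E_G[(t - s)^+] be the integrated CDF, so that H' = G and E_G[s | s <= t] = t - H(t)/G(t).
   Then (w-HE) reads H(tau) = phi_d G(tau) and phi_d G <= H to the right of tau, while (w-P) caps
   phi_t by H(mu + phi_d) - phi_d; hence the revenue is at most the gain H(mu + phi_d) - H(tau).
   On [tau, mu + phi_d] we have H' <= H / phi_d, so by Gronwall H(tau) >= e^(-L/phi_d) H(mu + phi_d)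
   with L = mu + phi_d - tau <= mu - lo.  Together with H(hi) = hi - mu and the monotonicity of G this
   bounds the gain by (hi - mu)(1 - e^(-L/(hi - mu))), strictly unless phi_d = hi - mu.  In the case of
   equality Gronwall is tight in both directions, which pins down H, and hence G, above tau, and forces
   G to be constant below tau; the optimum G* is realised by pushing the uniform distribution on [0,1]
   forward along its quantile function. *)

section \<open>The integrated CDF of a distribution on an interval\<close>

definition integrated_cdf :: "real measure \<Rightarrow> real \<Rightarrow> real" where
  "integrated_cdf G t = (LINT s|G. max (t - s) 0)"

lemma dist_on_real_distribution: "dist_on G lo hi \<Longrightarrow> real_distribution G"
  unfolding dist_on_def real_distribution_def real_distribution_axioms_def by auto

locale supported_distribution =
  fixes G :: "real measure" and lo hi :: real
  assumes dist_on: "dist_on G lo hi"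
begin

sublocale real_distribution G
  by (rule dist_on_real_distribution[OF dist_on])

lemma AE_in_support: "AE s in G. lo \<le> s \<and> s \<le> hi"
proof -
  have "AE s in G. s \<in> {lo..hi}"
    using dist_on unfolding dist_on_def by (intro AE_prob_1) auto
  then show ?thesis by auto
qed

lemma integrable_bounded_on_support:
  fixes f :: "real \<Rightarrow> real"
  assumes "f \<in> borel_measurable borel" and "\<And>s. lo \<le> s \<Longrightarrow> s \<le> hi \<Longrightarrow> \<bar>f s\<bar> \<le> B"
  shows "integrable G f"
proof (rule integrable_const_bound[where B=B])
  show "AE s in G. norm (f s) \<le> B"
    using AE_in_support by eventually_elim (simp add: assms(2))
  show "f \<in> borel_measurable G"
    using assms(1) measurable_cong_sets[OF events_eq_borel refl] by simp
qed

lemma integrable_id [intro]: "integrable G (\<lambda>s. s)"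
  by (rule integrable_bounded_on_support[where B="\<bar>lo\<bar> + \<bar>hi\<bar>"]) auto

lemma integrable_max_diff [intro]: "integrable G (\<lambda>s. max (t - s) 0)"
  by (rule integrable_bounded_on_support[where B="\<bar>t\<bar> + \<bar>lo\<bar> + \<bar>hi\<bar>"]) auto

lemma integrable_indicator_atMost [simp]: "integrable G (indicator {..t} :: real \<Rightarrow> real)"
  by (rule integrable_bounded_on_support[where B=1]) (auto simp: indicator_def)

lemma integrable_indicator_id: "A \<in> sets borel \<Longrightarrow> integrable G (\<lambda>s. indicator A s * s)"
  by (rule integrable_bounded_on_support[where B="\<bar>lo\<bar> + \<bar>hi\<bar>"]) (auto simp: indicator_def)

lemma integral_diff_mean: "(LINT s|G. c - s) = c - (LINT s|G. s)"
  by (simp add: Bochner_Integration.integral_diff integrable_id prob_space[simplified])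

lemma integral_minus_const: "(LINT s|G. s - c) = (LINT s|G. s) - c"
  by (simp add: Bochner_Integration.integral_diff integrable_id prob_space[simplified])

lemma cdf_above_support: "hi \<le> t \<Longrightarrow> cdf G t = 1"
proof -
  assume "hi \<le> t"
  have "1 = measure G {lo..hi}"
    using dist_on by (simp add: dist_on_def)
  also have "\<dots> \<le> cdf G t"
    unfolding cdf_def by (rule finite_measure_mono) (use \<open>hi \<le> t\<close> in auto)
  finally show ?thesis
    using cdf_bounded_prob[of t] by simp
qed

lemma integrated_cdf_eq: "integrated_cdf G t = t * cdf G t - (LINT s:{..t}|G. s)"
proof -
  have "integrated_cdf G t = (LINT s|G. t * indicator {..t} s - indicator {..t} s * s)"
    unfolding integrated_cdf_def by (rule Bochner_Integration.integral_cong) (auto simp: indicator_def)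
  also have "\<dots> = t * (LINT s|G. indicator {..t} s) - (LINT s|G. indicator {..t} s * s)"
    using integrable_indicator_id[of "{..t}"]
    by (subst Bochner_Integration.integral_diff) auto
  finally show ?thesis by (simp add: cdf_def set_lebesgue_integral_def)
qed

lemma cond_mean_le_eq: "cdf G t > 0 \<Longrightarrow> cond_mean_le G t = t - integrated_cdf G t / cdf G t"
  unfolding cond_mean_le_def integrated_cdf_eq by (simp add: field_simps)

lemma integrated_cdf_nonneg: "0 \<le> integrated_cdf G t"
  unfolding integrated_cdf_def by (rule Bochner_Integration.integral_nonneg) auto

lemma integrated_cdf_ge: "t - (LINT s|G. s) \<le> integrated_cdf G t"
  unfolding integrated_cdf_def integral_diff_mean[symmetric] by (rule integral_mono) auto

lemma integrated_cdf_above_support: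
  assumes "hi \<le> t"
  shows "integrated_cdf G t = t - (LINT s|G. s)"
  unfolding integrated_cdf_def integral_diff_mean[symmetric]
proof (rule integral_cong_AE)
  show "AE s in G. max (t - s) 0 = t - s"
    using AE_in_support by eventually_elim (use assms in auto)
qed auto

lemma integrated_cdf_le: "integrated_cdf G t \<le> (t - lo) * cdf G t"
proof -
  have "integrated_cdf G t \<le> (LINT s|G. (t - lo) * indicator {..t} s)"
    unfolding integrated_cdf_def
  proof (rule integral_mono_AE)
    show "AE s in G. max (t - s) 0 \<le> (t - lo) * indicator {..t} s"
      using AE_in_support by eventually_elim (auto simp: indicator_def)
  qed auto
  then show ?thesis by (simp add: cdf_def)
qed

lemma integrated_cdf_diff_le:
  assumes "t \<le> t'"
  shows "integrated_cdf G t' - integrated_cdf G t \<le> (t' - t) * cdf G t'"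
proof -
  have "integrated_cdf G t' - integrated_cdf G t = (LINT s|G. max (t' - s) 0 - max (t - s) 0)"
    unfolding integrated_cdf_def by (rule Bochner_Integration.integral_diff[symmetric]) auto
  also have "\<dots> \<le> (LINT s|G. (t' - t) * indicator {..t'} s)"
    by (rule integral_mono) (use assms in \<open>auto split: split_indicator\<close>)
  finally show ?thesis by (simp add: cdf_def)
qed

lemma integrated_cdf_diff_ge:
  assumes "t \<le> t'"
  shows "(t' - t) * cdf G t \<le> integrated_cdf G t' - integrated_cdf G t"
proof -
  have "(t' - t) * cdf G t = (LINT s|G. (t' - t) * indicator {..t} s)"
    by (simp add: cdf_def)
  also have "\<dots> \<le> (LINT s|G. max (t' - s) 0 - max (t - s) 0)"
    by (rule integral_mono) (use assms in \<open>auto split: split_indicator\<close>)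
  also have "\<dots> = integrated_cdf G t' - integrated_cdf G t"
    unfolding integrated_cdf_def by (rule Bochner_Integration.integral_diff) auto
  finally show ?thesis .
qed

lemma integrated_cdf_le_chord:
  assumes "lo \<le> c" "c \<le> hi" "lo < hi"
  shows "integrated_cdf G c \<le> (c - lo) / (hi - lo) * (hi - (LINT s|G. s))"
proof -
  have "integrated_cdf G c \<le> (LINT s|G. (c - lo) / (hi - lo) * (hi - s))"
    unfolding integrated_cdf_def
  proof (rule integral_mono_AE)
    show "AE s in G. max (c - s) 0 \<le> (c - lo) / (hi - lo) * (hi - s)"
      using AE_in_support
    proof eventually_elim
      case (elim s)
      show ?case
      proof (cases "s \<le> c")
        case True
        have "(c - hi) * (s - lo) \<le> 0"
          using elim assms by (intro mult_nonpos_nonneg) auto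
        then have "(c - s) * (hi - lo) \<le> (c - lo) * (hi - s)"
          by (simp add: algebra_simps)
        then show ?thesis
          using True assms by (simp add: field_simps)
      qed (use elim assms in \<open>auto intro!: mult_nonneg_nonneg divide_nonneg_nonneg\<close>)
    qed
    show "integrable G (\<lambda>s. (c - lo) / (hi - lo) * (hi - s))"
      by (intro integrable_mult_right Bochner_Integration.integrable_diff) auto
  qed auto
  then show ?thesis
    by (simp add: integral_diff_mean)
qed

lemma wP_integral_le:
  "(LINT s:{m..hi}|G. s - m) \<le> integrated_cdf G m - m + (LINT s|G. s)"
proof -
  have "(LINT s:{m..hi}|G. s - m) \<le> (LINT s|G. max (m - s) 0 + (s - m))"
    unfolding set_lebesgue_integral_def
  proof (rule integral_mono)
    show "integrable G (\<lambda>s. indicator {m..hi} s *\<^sub>R (s - m))"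
      by (rule integrable_bounded_on_support[where B="\<bar>lo\<bar> + \<bar>hi\<bar> + \<bar>m\<bar>"])
        (auto simp: indicator_def)
    show "integrable G (\<lambda>s. max (m - s) 0 + (s - m))"
      by (rule integrable_bounded_on_support[where B="2 * (\<bar>lo\<bar> + \<bar>hi\<bar> + \<bar>m\<bar>)"]) auto
  qed (auto split: split_indicator)
  also have "\<dots> = integrated_cdf G m - m + (LINT s|G. s)"
    using integral_minus_const[of m] unfolding integrated_cdf_def
    by (subst Bochner_Integration.integral_add) auto
  finally show ?thesis .
qed

lemma wHE_iff:
  "wHE G d \<tau> \<longleftrightarrow> 0 < cdf G \<tau> \<and> integrated_cdf G \<tau> = d * cdf G \<tau>
     \<and> (\<forall>t>\<tau>. d * cdf G t \<le> integrated_cdf G t)"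
proof -
  have pos: "0 < cdf G t" if "0 < cdf G \<tau>" "\<tau> \<le> t" for t
    using that cdf_nondecreasing[of \<tau> t] by linarith
  have eq: "t - d = cond_mean_le G t \<longleftrightarrow> integrated_cdf G t = d * cdf G t"
    and ge: "t - d \<ge> cond_mean_le G t \<longleftrightarrow> d * cdf G t \<le> integrated_cdf G t"
    if "0 < cdf G t" for t
    using that by (auto simp: cond_mean_le_eq divide_eq_eq le_divide_eq)
  show ?thesis
  proof (cases "0 < cdf G \<tau>")
    case True
    have "(\<forall>t>\<tau>. t - d \<ge> cond_mean_le G t) \<longleftrightarrow> (\<forall>t>\<tau>. d * cdf G t \<le> integrated_cdf G t)"
      using ge pos[OF True] less_imp_le by blast
    then show ?thesis
      unfolding wHE_def using eq[OF True] True by blast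
  qed (simp add: wHE_def)
qed

lemma wHE_integrated_cdf_ge:
  assumes "wHE G d \<tau>" "\<tau> \<le> t"
  shows "d * cdf G t \<le> integrated_cdf G t"
  using assms unfolding wHE_iff by (cases "t = \<tau>") auto

lemma cdf_const_if_integrated_cdf_eq:
  assumes "lo < \<tau>" and H\<tau>: "integrated_cdf G \<tau> = (\<tau> - lo) * cdf G \<tau>" and "lo \<le> s" "s \<le> \<tau>"
  shows "cdf G s = cdf G \<tau>"
proof -
  have inner: "cdf G r = cdf G \<tau>" if r: "lo < r" "r \<le> \<tau>" for r
  proof -
    have "(\<tau> - lo) * cdf G \<tau> \<le> (\<tau> - r) * cdf G \<tau> + (r - lo) * cdf G r"
      using H\<tau> integrated_cdf_diff_le[of r \<tau>] integrated_cdf_le[of r] r by linarith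
    then have "(r - lo) * cdf G \<tau> \<le> (r - lo) * cdf G r"
      by (simp add: algebra_simps)
    then have "cdf G \<tau> \<le> cdf G r"
      using r by simp
    then show ?thesis
      using cdf_nondecreasing[of r \<tau>] r by linarith
  qed
  have "\<forall>\<^sub>F r in at_right lo. cdf G r = cdf G \<tau>"
    using eventually_at_right_real[OF \<open>lo < \<tau>\<close>] by eventually_elim (auto intro: inner)
  moreover have "(cdf G \<longlongrightarrow> cdf G lo) (at_right lo)"
    using cdf_is_right_cont[of lo] by (simp add: continuous_within)
  ultimately have "((\<lambda>_. cdf G \<tau>) \<longlongrightarrow> cdf G lo) (at_right lo)"
    by (simp add: tendsto_cong)
  then have "cdf G lo = cdf G \<tau>"
    using tendsto_unique[OF trivial_limit_at_right_real] tendsto_const by blast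
  then show ?thesis
    using assms inner[of s] by (cases "s = lo") auto
qed

lemma lo_less_mean_of_mass:
  assumes "lo < c" "0 < measure G {c<..}"
  shows "lo < (LINT s|G. s)"
proof -
  have "(c - lo) * measure G {c<..} = (LINT s|G. (c - lo) * indicator {c<..} s)"
    by simp
  also have "\<dots> \<le> (LINT s|G. s - lo)"
  proof (rule integral_mono_AE)
    show "integrable G (\<lambda>s. (c - lo) * indicator {c<..} s)"
      by (rule integrable_bounded_on_support[where B="\<bar>c - lo\<bar>"]) (auto simp: indicator_def)
    show "AE s in G. (c - lo) * indicator {c<..} s \<le> s - lo"
      using AE_in_support by eventually_elim (auto simp: indicator_def)
  qed (auto intro!: Bochner_Integration.integrable_diff)
  finally have "(c - lo) * measure G {c<..} \<le> (LINT s|G. s) - lo"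
    by (simp add: integral_minus_const)
  moreover have "0 < (c - lo) * measure G {c<..}"
    using assms by simp
  ultimately show ?thesis
    by linarith
qed

lemma mean_less_hi_of_mass:
  assumes "c < hi" "0 < measure G {..<c}"
  shows "(LINT s|G. s) < hi"
proof -
  have "(hi - c) * measure G {..<c} = (LINT s|G. (hi - c) * indicator {..<c} s)"
    by simp
  also have "\<dots> \<le> (LINT s|G. hi - s)"
  proof (rule integral_mono_AE)
    show "integrable G (\<lambda>s. (hi - c) * indicator {..<c} s)"
      by (rule integrable_bounded_on_support[where B="\<bar>hi - c\<bar>"]) (auto simp: indicator_def)
    show "AE s in G. (hi - c) * indicator {..<c} s \<le> hi - s"
      using AE_in_support by eventually_elim (auto simp: indicator_def)
  qed (auto intro!: Bochner_Integration.integrable_diff)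
  finally have "(hi - c) * measure G {..<c} \<le> hi - (LINT s|G. s)"
    by (simp add: integral_diff_mean)
  moreover have "0 < (hi - c) * measure G {..<c}"
    using assms by simp
  ultimately show ?thesis
    by linarith
qed

end

section \<open>A Gronwall inequality and two exponential inequalities\<close>

lemma gronwall_grid:
  fixes H C :: "real \<Rightarrow> real"
  assumes "0 < d" "0 \<le> h" "h < d"
    and step: "\<And>t t'. a \<le> t \<Longrightarrow> t \<le> t' \<Longrightarrow> t' \<le> a + n * h \<Longrightarrow> H t' - H t \<le> (t' - t) * C t'"
    and ratio: "\<And>t. a \<le> t \<Longrightarrow> t \<le> a + n * h \<Longrightarrow> d * C t \<le> H t"
  shows "H (a + n * h) * (1 - h / d) ^ n \<le> H a"
proof -
  have factor_pos: "0 < 1 - h / d"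
    using assms(1,3) by simp
  have "j \<le> n \<Longrightarrow> H (a + j * h) * (1 - h / d) ^ j \<le> H a" for j
  proof (induction j)
    case (Suc j)
    define t where "t = a + j * h"
    have "real (Suc j) * h \<le> n * h"
      using Suc.prems \<open>0 \<le> h\<close> by (intro mult_right_mono) auto
    then have in_range: "a \<le> t" "t + h \<le> a + n * h"
      using \<open>0 \<le> h\<close> by (simp_all add: t_def algebra_simps)
    have "H (t + h) - H t \<le> h * C (t + h)"
      using step[of t "t + h"] in_range \<open>0 \<le> h\<close> by simp
    also have "\<dots> \<le> h * (H (t + h) / d)"
      using ratio[of "t + h"] in_range assms(1,2) by (intro mult_left_mono) (auto simp: field_simps)
    finally have "H (t + h) * (1 - h / d) \<le> H t"
      using assms(1) by (simp add: field_simps)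
    then have "H (t + h) * (1 - h / d) * (1 - h / d) ^ j \<le> H t * (1 - h / d) ^ j"
      using factor_pos by (intro mult_right_mono) auto
    also have "\<dots> \<le> H a"
      using Suc by (simp add: t_def)
    finally show ?case
      by (simp add: t_def algebra_simps)
  qed simp
  then show ?thesis
    by simp
qed

lemma gronwall_increments:
  fixes H C :: "real \<Rightarrow> real"
  assumes "0 < d" "a \<le> b"
    and step: "\<And>t t'. a \<le> t \<Longrightarrow> t \<le> t' \<Longrightarrow> t' \<le> b \<Longrightarrow> H t' - H t \<le> (t' - t) * C t'"
    and ratio: "\<And>t. a \<le> t \<Longrightarrow> t \<le> b \<Longrightarrow> d * C t \<le> H t"
  shows "H b * exp (- ((b - a) / d)) \<le> H a"
proof -
  define c where "c = (b - a) / d"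
  have grid: "H b * (1 + - c / n) ^ n \<le> H a" if n: "c < real n" for n :: nat
  proof -
    have "0 < real n"
      using n assms(1,2) by (smt (verit) c_def divide_nonneg_pos)
    then have b: "b = a + n * ((b - a) / n)" and "(b - a) / n / d = c / n"
      by (simp_all add: c_def field_simps)
    moreover have "(b - a) / n < d"
      using n \<open>0 < real n\<close> assms(1) by (simp add: c_def field_simps)
    ultimately show ?thesis
      using gronwall_grid[of d "(b - a) / n" a n H C] assms \<open>0 < real n\<close> by (simp add: b[symmetric])
  qed
  obtain N :: nat where "c < real N"
    using reals_Archimedean2 by blast
  then have "eventually (\<lambda>n. H b * (1 + - c / real n) ^ n \<le> H a) sequentially"
    by (intro eventually_sequentiallyI[of N] grid) (meson le_less_trans of_nat_le_iff less_le_trans)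
  moreover have "(\<lambda>n. H b * (1 + - c / real n) ^ n) \<longlonglongrightarrow> H b * exp (- c)"
    by (intro tendsto_mult tendsto_const tendsto_exp_limit_sequentially)
  ultimately have "H b * exp (- c) \<le> H a"
    using tendsto_upperbound by force
  then show ?thesis
    by (simp add: c_def)
qed

lemma two_mult_less_exp_minus_exp_neg:
  fixes y :: real
  assumes "0 < y"
  shows "2 * y < exp y - exp (- y)"
proof -
  have "(\<lambda>t. exp t - exp (- t) - 2 * t) 0 < (\<lambda>t. exp t - exp (- t) - 2 * t) y"
  proof (rule DERIV_pos_imp_increasing_open[OF assms])
    fix x :: real
    assume "0 < x" "x < y"
    have "exp x + exp (- x) - 2 = (exp (x / 2) - exp (- x / 2))\<^sup>2"
      by (simp add: power2_eq_square algebra_simps flip: exp_add)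
    moreover have "exp (x / 2) \<noteq> exp (- x / 2)"
      using \<open>0 < x\<close> by simp
    ultimately have "0 < exp x + exp (- x) - 2"
      by simp
    moreover have "((\<lambda>t. exp t - exp (- t) - 2 * t) has_real_derivative exp x + exp (- x) - 2) (at x)"
      by (auto intro!: derivative_eq_intros)
    ultimately show "\<exists>l. ((\<lambda>t. exp t - exp (- t) - 2 * t) has_real_derivative l) (at x) \<and> 0 < l"
      by blast
  qed (intro continuous_intros)
  then show ?thesis
    by simp
qed

lemma inverse_minus_inverse_exp_minus_one_decreasing:
  fixes a b :: real
  assumes "0 < a" "a < b"
  shows "1 / b - 1 / (exp b - 1) < 1 / a - 1 / (exp a - 1)"
proof -
  have "(\<lambda>x. 1 / x - 1 / (exp x - 1)) b < (\<lambda>x. 1 / x - 1 / (exp x - 1)) a"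
  proof (rule DERIV_neg_imp_decreasing_open[OF assms(2)])
    fix x :: real
    assume "a < x" "x < b"
    then have "0 < x" and e: "0 < exp x - 1"
      using assms by auto
    have "x * exp (x / 2) < (exp (x / 2) - exp (- (x / 2))) * exp (x / 2)"
      using two_mult_less_exp_minus_exp_neg[of "x / 2"] \<open>0 < x\<close> by (intro mult_strict_right_mono) auto
    also have "\<dots> = exp x - 1"
      by (simp add: algebra_simps flip: exp_add)
    finally have "(x * exp (x / 2))\<^sup>2 < (exp x - 1)\<^sup>2"
      using \<open>0 < x\<close> by (intro power_strict_mono) auto
    then have "x\<^sup>2 * exp x < (exp x - 1)\<^sup>2"
      by (simp add: power2_eq_square algebra_simps flip: exp_add)
    then have "- 1 / x\<^sup>2 + exp x / (exp x - 1)\<^sup>2 < 0"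
      using \<open>0 < x\<close> e by (simp add: field_simps)
    moreover have "((\<lambda>x. 1 / x - 1 / (exp x - 1)) has_real_derivative - 1 / x\<^sup>2 + exp x / (exp x - 1)\<^sup>2) (at x)"
      using \<open>0 < x\<close> e by (auto intro!: derivative_eq_intros simp: power2_eq_square field_simps)
    ultimately show "\<exists>l. ((\<lambda>x. 1 / x - 1 / (exp x - 1)) has_real_derivative l) (at x) \<and> l < 0"
      by blast
  next
    show "continuous_on {a..b} (\<lambda>x. 1 / x - 1 / (exp x - 1))"
      using assms by (intro continuous_intros) auto
  qed
  then show ?thesis
    by simp
qed

lemma one_minus_exp_ratio_less:
  fixes L d D :: real
  assumes "0 < L" "0 < d" "d < D"
  shows "(1 - exp (- (L / d))) * L < (1 - exp (- (L / D))) * (L + (1 - exp (- (L / d))) * (D - d))"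
proof -
  define A B where "A = exp (- (L / D))" and "B = exp (- (L / d))"
  have "0 < L / D" "L / D < L / d"
    using assms by (simp_all add: frac_less2)
  then have A: "0 < A" "A < 1" and B: "0 < B" "B < 1"
    by (auto simp: A_def B_def)
  have "1 / (L / d) - B / (1 - B) < 1 / (L / D) - A / (1 - A)"
    using inverse_minus_inverse_exp_minus_one_decreasing[OF \<open>0 < L / D\<close> \<open>L / D < L / d\<close>] A B
    by (simp add: A_def B_def exp_minus field_simps)
  moreover have "A / (1 - A) - B / (1 - B) = (A - B) / ((1 - A) * (1 - B))"
    using A B by (simp add: field_simps)
  ultimately have "(A - B) / ((1 - A) * (1 - B)) < (D - d) / L"
    by (simp add: diff_divide_distrib)
  then have "A - B < (D - d) / L * ((1 - A) * (1 - B))"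
    using A B by (simp add: pos_divide_less_eq)
  then have "(A - B) * L < (1 - A) * (1 - B) * (D - d)"
    using assms by (simp add: field_simps)
  then show ?thesis
    by (simp add: A_def B_def algebra_simps)
qed

lemma divide_one_plus_less_one_minus_exp:
  fixes a :: real
  assumes "0 < a"
  shows "a / (1 + a) < 1 - exp (- a)"
proof -
  have "1 + a < exp a"
    using exp_minus_greater[of "- a"] assms by simp
  then have "exp (- a) < 1 / (1 + a)"
    using assms by (simp add: exp_minus field_simps)
  then show ?thesis
    using assms by (simp add: field_simps)
qed

section \<open>The upper bound\<close>

locale RE_setting =
  fixes lo hi \<mu> :: real
  assumes lo_less_mean: "lo < \<mu>" and mean_less_hi: "\<mu> < hi"
begin

abbreviation RE_value :: real where
  "RE_value \<equiv> (hi - \<mu>) * (1 - exp ((lo - \<mu>) / (hi - \<mu>)))"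

lemma RE_value_eq: "RE_value = (hi - \<mu>) * (1 - exp (- ((\<mu> - lo) / (hi - \<mu>))))"
  by (simp add: minus_divide_left)

lemma RE_value_pos: "0 < RE_value"
  using lo_less_mean mean_less_hi by (simp add: RE_value_eq)

lemma one_minus_exp_le_RE_value:
  assumes "L \<le> \<mu> - lo"
  shows "(hi - \<mu>) * (1 - exp (- (L / (hi - \<mu>)))) \<le> RE_value"
    and "L < \<mu> - lo \<Longrightarrow> (hi - \<mu>) * (1 - exp (- (L / (hi - \<mu>)))) < RE_value"
  using assms mean_less_hi by (simp_all add: RE_value_eq divide_right_mono divide_strict_right_mono)

end

locale RE_feasible_point = RE_setting +
  fixes G :: "real measure" and \<phi>t d \<tau> :: real
  assumes feasible: "RE_feasible lo hi \<mu> G \<phi>t d \<tau>"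
begin

sublocale supported_distribution G lo hi
  using feasible by unfold_locales (simp add: RE_feasible_def)

abbreviation gain :: real where
  "gain \<equiv> integrated_cdf G (\<mu> + d) - integrated_cdf G \<tau>"

lemma mean_eq: "(LINT s|G. s) = \<mu>"
  using feasible by (simp add: RE_feasible_def)

lemma wHE: "wHE G d \<tau>"
  using feasible by (simp add: RE_feasible_def)

lemma cdf_threshold_pos: "0 < cdf G \<tau>"
  using wHE by (simp add: wHE_iff)

lemma integrated_cdf_threshold: "integrated_cdf G \<tau> = d * cdf G \<tau>"
  using wHE by (simp add: wHE_iff)

lemma integrated_cdf_hi: "integrated_cdf G hi = hi - \<mu>"
  using integrated_cdf_above_support[of hi] mean_eq by simp

lemma fee_nonneg: "0 \<le> d"
  using integrated_cdf_threshold integrated_cdf_nonneg[of \<tau>] cdf_threshold_pos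
  by (simp add: zero_le_mult_iff)

lemma fee_le: "d \<le> \<tau> - lo"
  using integrated_cdf_threshold integrated_cdf_le[of \<tau>] cdf_threshold_pos by simp

lemma threshold_le: "\<tau> \<le> \<mu> + d"
proof (rule ccontr)
  assume "\<not> \<tau> \<le> \<mu> + d"
  then have "d * cdf G \<tau> < (\<tau> - \<mu>) * cdf G \<tau>"
    using cdf_threshold_pos by simp
  also have "\<dots> \<le> \<tau> - \<mu>"
    using \<open>\<not> \<tau> \<le> \<mu> + d\<close> fee_nonneg cdf_bounded_prob[of \<tau>] by (simp add: mult_left_le)
  also have "\<dots> \<le> integrated_cdf G \<tau>"
    using integrated_cdf_ge[of \<tau>] mean_eq by simp
  finally show False
    using integrated_cdf_threshold by simp
qed

lemma RE_obj_le_gain: "RE_obj G \<phi>t d \<tau> \<le> gain"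
proof -
  have "\<phi>t \<le> integrated_cdf G (\<mu> + d) - d"
    using feasible wP_integral_le[of "\<mu> + d"] mean_eq by (simp add: RE_feasible_def wP_def)
  then show ?thesis
    using integrated_cdf_threshold by (simp add: RE_obj_def algebra_simps)
qed

lemma gain_zero_fee:
  assumes "d = 0"
  shows "gain < RE_value"
proof -
  define k D where "k = \<mu> - lo" and "D = hi - \<mu>"
  have "0 < k" "0 < D"
    using lo_less_mean mean_less_hi by (simp_all add: k_def D_def)
  have "gain = integrated_cdf G \<mu>"
    using integrated_cdf_threshold assms by simp
  also have "\<dots> \<le> k / (k + D) * D"
    using integrated_cdf_le_chord[of \<mu>] lo_less_mean mean_less_hi mean_eq by (simp add: k_def D_def)
  also have "\<dots> = D * ((k / D) / (1 + k / D))"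
    using \<open>0 < D\<close> by (simp add: field_simps)
  also have "\<dots> < D * (1 - exp (- (k / D)))"
    using divide_one_plus_less_one_minus_exp[of "k / D"] \<open>0 < k\<close> \<open>0 < D\<close>
    by (intro mult_strict_left_mono) auto
  finally show ?thesis
    by (simp add: RE_value_eq k_def D_def)
qed

lemma gain_large_fee:
  assumes "hi - \<mu> < d"
  shows "gain = 0"
proof -
  have "hi < \<tau>"
  proof (rule ccontr)
    assume "\<not> hi < \<tau>"
    then show False
      using wHE_integrated_cdf_ge[OF wHE, of hi] cdf_above_support[of hi] integrated_cdf_hi assms
      by simp
  qed
  then have "\<tau> = \<mu> + d"
    using integrated_cdf_threshold cdf_above_support[of \<tau>] integrated_cdf_above_support[of \<tau>] mean_eq
    by simp
  then show ?thesis
    by simp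
qed

text \<open>Gronwall bounds the gain by \<open>v H(\<mu> + d)\<close>, monotonicity of the CDF bounds it by
  \<open>L G(\<mu> + d)\<close> and gives \<open>(hi - \<mu> - d) G(\<mu> + d) \<le> hi - \<mu> - H(\<mu> + d)\<close>; eliminating
  \<open>G(\<mu> + d)\<close> and \<open>H(\<mu> + d)\<close> yields the bound.\<close>
lemma gain_moderate_fee_mult_le:
  assumes "0 < d" "d \<le> hi - \<mu>"
  defines "L \<equiv> \<mu> + d - \<tau>" and "v \<equiv> 1 - exp (- ((\<mu> + d - \<tau>) / d))"
  shows "(gain) * (L + v * (hi - \<mu> - d)) \<le> v * (hi - \<mu>) * L"
proof -
  define z where "z = gain"
  have "0 \<le> L" "0 \<le> v"
    using threshold_le assms(1) by (simp_all add: L_def v_def)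
  have "integrated_cdf G (\<mu> + d) * exp (- (L / d)) \<le> integrated_cdf G \<tau>"
    unfolding L_def
  proof (rule gronwall_increments[where C = "cdf G"])
    show "d * cdf G t \<le> integrated_cdf G t" if "\<tau> \<le> t" for t
      using wHE_integrated_cdf_ge[OF wHE that] .
  qed (use assms(1) threshold_le integrated_cdf_diff_le in auto)
  then have z_le: "z \<le> v * integrated_cdf G (\<mu> + d)"
    by (simp add: z_def v_def L_def algebra_simps)
  have z_le_cdf: "z \<le> L * cdf G (\<mu> + d)"
    using integrated_cdf_diff_le[of \<tau> "\<mu> + d"] threshold_le by (simp add: z_def L_def)
  have "(hi - \<mu> - d) * cdf G (\<mu> + d) \<le> (hi - \<mu>) - integrated_cdf G (\<mu> + d)"
    using integrated_cdf_diff_ge[of "\<mu> + d" hi] integrated_cdf_hi assms(2) by (simp add: diff_diff_eq)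
  then have "z * L \<le> v * ((hi - \<mu>) - (hi - \<mu> - d) * cdf G (\<mu> + d)) * L"
    using z_le \<open>0 \<le> L\<close> \<open>0 \<le> v\<close> by (smt (verit) mult_left_mono mult_right_mono)
  also have "\<dots> = v * (hi - \<mu>) * L - v * (hi - \<mu> - d) * (L * cdf G (\<mu> + d))"
    by (simp add: algebra_simps)
  also have "\<dots> \<le> v * (hi - \<mu>) * L - v * (hi - \<mu> - d) * z"
    using z_le_cdf \<open>0 \<le> v\<close> assms(2) by (simp add: mult_left_mono)
  finally show ?thesis
    by (simp add: z_def algebra_simps)
qed

lemma gain_le_if_fee_eq:
  assumes "d = hi - \<mu>"
  shows "gain \<le> (hi - \<mu>) * (1 - exp (- ((\<mu> + d - \<tau>) / (hi - \<mu>))))"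
proof (cases "\<tau> = \<mu> + d")
  case False
  then have "0 < \<mu> + d - \<tau>"
    using threshold_le by simp
  then show ?thesis
    using gain_moderate_fee_mult_le assms mean_less_hi by (simp add: mult.commute)
qed simp

lemma gain_lt_if_fee_lt:
  assumes "0 < d" "d < hi - \<mu>"
  shows "gain < RE_value"
proof (cases "\<tau> = \<mu> + d")
  case True
  then show ?thesis
    using RE_value_pos by simp
next
  case False
  define z L v where "z = gain"
    and "L = \<mu> + d - \<tau>" and "v = 1 - exp (- ((\<mu> + d - \<tau>) / d))"
  have "0 < L" "L \<le> \<mu> - lo" "0 \<le> v"
    using False threshold_le fee_le assms(1) by (simp_all add: L_def v_def)
  then have "0 < L + v * (hi - \<mu> - d)"
    using assms(2) by (simp add: add_pos_nonneg)
  have "v * L < (1 - exp (- (L / (hi - \<mu>)))) * (L + v * (hi - \<mu> - d))"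
    using one_minus_exp_ratio_less[OF \<open>0 < L\<close> assms] by (simp add: v_def L_def)
  then have "(hi - \<mu>) * (v * L) < (hi - \<mu>) * ((1 - exp (- (L / (hi - \<mu>)))) * (L + v * (hi - \<mu> - d)))"
    using mean_less_hi by (intro mult_strict_left_mono) auto
  then have "z < (hi - \<mu>) * (1 - exp (- (L / (hi - \<mu>))))"
    using gain_moderate_fee_mult_le[OF assms(1) less_imp_le[OF assms(2)]] \<open>0 < L + v * (hi - \<mu> - d)\<close>
    unfolding z_def L_def v_def[symmetric]
    by (smt (verit) mult.commute mult.left_commute mult_strict_right_mono)
  also have "\<dots> \<le> RE_value"
    using one_minus_exp_le_RE_value(1)[OF \<open>L \<le> \<mu> - lo\<close>] .
  finally show ?thesis
    by (simp add: z_def)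
qed

lemma gain_le_RE_value:
  shows "gain \<le> RE_value"
    and "gain = RE_value \<Longrightarrow> d = hi - \<mu> \<and> \<tau> = lo + d"
proof -
  define z where "z = gain"
  have "z < RE_value \<or> d = hi - \<mu>"
    using fee_nonneg gain_zero_fee gain_lt_if_fee_lt gain_large_fee RE_value_pos
    by (cases "d = 0"; cases "d < hi - \<mu>"; cases "hi - \<mu> < d") (auto simp: z_def)
  moreover have "z \<le> RE_value" and "z = RE_value \<Longrightarrow> \<tau> = lo + d" if "d = hi - \<mu>"
    using gain_le_if_fee_eq[OF that] one_minus_exp_le_RE_value[of "\<mu> + d - \<tau>"] fee_le
    by (fastforce simp: z_def)+
  ultimately show "z \<le> RE_value" and "z = RE_value \<Longrightarrow> d = hi - \<mu> \<and> \<tau> = lo + d"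
    by auto
qed

theorem RE_obj_le_RE_value: "RE_obj G \<phi>t d \<tau> \<le> RE_value"
  using RE_obj_le_gain gain_le_RE_value(1) by linarith

end

section \<open>Uniqueness of the optimum\<close>

locale RE_optimal_point = RE_feasible_point +
  assumes optimal: "RE_obj G \<phi>t d \<tau> = RE_value"
begin

lemma gain_eq_RE_value: "gain = RE_value"
  using RE_obj_le_gain gain_le_RE_value(1) optimal by linarith

lemma fee_eq: "d = hi - \<mu>"
  using gain_le_RE_value(2)[OF gain_eq_RE_value] by simp

lemma threshold_eq: "\<tau> = lo + (hi - \<mu>)"
  using gain_le_RE_value(2)[OF gain_eq_RE_value] by simp

lemma fixed_fee_eq_zero: "\<phi>t = 0"
  using optimal gain_eq_RE_value integrated_cdf_threshold integrated_cdf_hi fee_eq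
  by (simp add: RE_obj_def algebra_simps)

lemma cdf_threshold_eq: "cdf G \<tau> = exp ((lo - \<mu>) / (hi - \<mu>))"
proof -
  have "(hi - \<mu>) * cdf G \<tau> = (hi - \<mu>) * exp ((lo - \<mu>) / (hi - \<mu>))"
    using optimal fixed_fee_eq_zero fee_eq by (simp add: RE_obj_def algebra_simps)
  then show ?thesis
    using mean_less_hi by simp
qed

lemma integrated_cdf_optimal:
  assumes "\<tau> \<le> s" "s \<le> hi"
  shows "integrated_cdf G s = (hi - \<mu>) * exp ((s - hi) / (hi - \<mu>))"
proof -
  define D where "D = hi - \<mu>"
  have "0 < D"
    using mean_less_hi by (simp add: D_def)
  have ratio: "D * cdf G t \<le> integrated_cdf G t" if "\<tau> \<le> t" for t
    using wHE_integrated_cdf_ge[OF wHE that] fee_eq by (simp add: D_def)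
  have "integrated_cdf G s * exp (- ((s - \<tau>) / D)) \<le> integrated_cdf G \<tau>"
    by (rule gronwall_increments[where C = "cdf G"]) (use \<open>0 < D\<close> assms ratio integrated_cdf_diff_le in auto)
  then have "integrated_cdf G s \<le> integrated_cdf G \<tau> * exp ((s - \<tau>) / D)"
    by (simp add: exp_minus field_simps)
  also have "\<dots> = D * exp ((\<tau> - hi) / D + (s - \<tau>) / D)"
    using integrated_cdf_threshold cdf_threshold_eq fee_eq threshold_eq by (simp add: D_def exp_add)
  also have "(\<tau> - hi) / D + (s - \<tau>) / D = (s - hi) / D"
    by (simp add: add_divide_distrib[symmetric])
  finally have "integrated_cdf G s \<le> D * exp ((s - hi) / D)" .
  moreover have "integrated_cdf G hi * exp (- ((hi - s) / D)) \<le> integrated_cdf G s"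
    by (rule gronwall_increments[where C = "cdf G"]) (use \<open>0 < D\<close> assms ratio integrated_cdf_diff_le in auto)
  then have "D * exp ((s - hi) / D) \<le> integrated_cdf G s"
    using integrated_cdf_hi by (simp add: D_def minus_divide_left)
  ultimately show ?thesis
    by (simp add: D_def)
qed

lemma cdf_optimal_ge:
  assumes "\<tau> \<le> r" "r < s" "s \<le> hi"
  shows "exp ((r - hi) / (hi - \<mu>)) \<le> cdf G s"
proof -
  define D where "D = hi - \<mu>"
  have "0 < D"
    using mean_less_hi by (simp add: D_def)
  have "exp ((r - hi) / D) * (1 + (s - r) / D) \<le> exp ((r - hi) / D) * exp ((s - r) / D)"
    by (intro mult_left_mono) auto
  also have "\<dots> = exp ((s - hi) / D)"
    by (simp add: add_divide_distrib[symmetric] flip: exp_add)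
  finally have "(s - r) * exp ((r - hi) / D) \<le> integrated_cdf G s - integrated_cdf G r"
    using integrated_cdf_optimal[of r] integrated_cdf_optimal[of s] assms \<open>0 < D\<close>
    by (simp add: D_def field_simps)
  also have "\<dots> \<le> (s - r) * cdf G s"
    using integrated_cdf_diff_le[of r s] assms by simp
  finally show ?thesis
    using assms by (simp add: D_def)
qed

lemma cdf_optimal:
  assumes "\<tau> \<le> s" "s \<le> hi"
  shows "cdf G s = exp ((s - hi) / (hi - \<mu>))"
proof -
  have "(hi - \<mu>) * cdf G s \<le> (hi - \<mu>) * exp ((s - hi) / (hi - \<mu>))"
    using wHE_integrated_cdf_ge[OF wHE assms(1)] fee_eq integrated_cdf_optimal[OF assms] by simp
  then have upper: "cdf G s \<le> exp ((s - hi) / (hi - \<mu>))"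
    using mean_less_hi by simp
  have "exp ((s - hi) / (hi - \<mu>)) \<le> cdf G s"
  proof (cases "s = \<tau>")
    case True
    then show ?thesis
      using cdf_threshold_eq threshold_eq by simp
  next
    case False
    then have "\<tau> < s"
      using assms by simp
    show ?thesis
    proof (rule tendsto_le[OF trivial_limit_at_left_real tendsto_const])
      show "((\<lambda>r. exp ((r - hi) / (hi - \<mu>))) \<longlongrightarrow> exp ((s - hi) / (hi - \<mu>))) (at_left s)"
        using mean_less_hi by (intro tendsto_intros) auto
      show "\<forall>\<^sub>F r in at_left s. exp ((r - hi) / (hi - \<mu>)) \<le> cdf G s"
        using eventually_at_left_real[OF \<open>\<tau> < s\<close>] by eventually_elim (use assms cdf_optimal_ge in auto)
    qed
  qed
  then show ?thesis
    using upper by simp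
qed

lemma cdf_eq_G_star:
  assumes "lo \<le> s" "s \<le> hi"
  shows "cdf G s = G_star lo hi \<mu> s"
proof (cases "s < \<tau>")
  case True
  have "integrated_cdf G \<tau> = (\<tau> - lo) * cdf G \<tau>"
    using integrated_cdf_threshold fee_eq threshold_eq by simp
  then have "cdf G s = cdf G \<tau>"
    using cdf_const_if_integrated_cdf_eq[of \<tau> s] assms True threshold_eq mean_less_hi by simp
  then show ?thesis
    using True cdf_threshold_eq threshold_eq by (simp add: G_star_def)
next
  case False
  then show ?thesis
    using cdf_optimal assms threshold_eq by (simp add: G_star_def)
qed

end

section \<open>Attaining the bound\<close>

definition G_star_quantile :: "real \<Rightarrow> real \<Rightarrow> real \<Rightarrow> real \<Rightarrow> real" where
  "G_star_quantile lo hi \<mu> u =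
     (if u < exp ((lo - \<mu>) / (hi - \<mu>)) then lo else hi + (hi - \<mu>) * ln u)"

definition G_star_measure :: "real \<Rightarrow> real \<Rightarrow> real \<Rightarrow> real measure" where
  "G_star_measure lo hi \<mu> = distr (uniform_measure lborel {0..1}) borel (G_star_quantile lo hi \<mu>)"

lemma G_star_quantile_measurable [measurable]: "G_star_quantile lo hi \<mu> \<in> borel_measurable borel"
  unfolding G_star_quantile_def by measurable

lemma prob_space_G_star_measure: "prob_space (G_star_measure lo hi \<mu>)"
  unfolding G_star_measure_def
  by (intro prob_space.prob_space_distr prob_space_uniform_measure) auto

lemma measure_G_star_measure:
  assumes "B \<in> sets borel"
  shows "measure (G_star_measure lo hi \<mu>) B = measure lborel ({0..1} \<inter> G_star_quantile lo hi \<mu> -` B)"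
  using assms measurable_sets_borel[OF G_star_quantile_measurable assms]
  unfolding G_star_measure_def by (simp add: measure_distr)

lemma integral_G_star_measure:
  fixes f :: "real \<Rightarrow> real"
  assumes [measurable]: "f \<in> borel_measurable borel"
  shows "integral\<^sup>L (G_star_measure lo hi \<mu>) f = (LINT u:{0..1}|lborel. f (G_star_quantile lo hi \<mu> u))"
proof -
  have "uniform_measure lborel {0..1::real} = density lborel (\<lambda>u. ennreal (indicator {0..1} u))"
    by (simp add: uniform_measure_def ennreal_indicator divide_ennreal_def)
  then show ?thesis
    unfolding G_star_measure_def set_lebesgue_integral_def
    by (simp add: integral_distr integral_density)
qed

lemma set_integrable_affine_ln:
  fixes a b \<alpha> \<beta> :: real
  assumes "0 < a"
  shows "set_integrable lborel {a..b} (\<lambda>u. \<alpha> + \<beta> * ln u)"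
  using assms by (intro borel_integrable_atLeastAtMost' continuous_intros) auto

lemma set_integral_affine_ln:
  fixes a b \<alpha> \<beta> :: real
  assumes "0 < a" "a \<le> b"
  shows "(LINT u:{a..b}|lborel. \<alpha> + \<beta> * ln u)
    = (\<alpha> * b + \<beta> * (b * ln b - b)) - (\<alpha> * a + \<beta> * (a * ln a - a))"
  unfolding set_lebesgue_integral_def
proof (rule integral_FTC_atLeastAtMost[OF assms(2)])
  fix x
  assume "a \<le> x" "x \<le> b"
  then have "0 < x"
    using assms(1) by simp
  then have "((\<lambda>u. \<alpha> * u + \<beta> * (u * ln u - u)) has_real_derivative \<alpha> + \<beta> * ln x) (at x)"
    by (auto intro!: derivative_eq_intros)
  then show "((\<lambda>u. \<alpha> * u + \<beta> * (u * ln u - u)) has_vector_derivative \<alpha> + \<beta> * ln x) (at x within {a..b})"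
    by (simp add: has_real_derivative_iff_has_vector_derivative has_vector_derivative_at_within)
next
  show "continuous_on {a..b} (\<lambda>u. \<alpha> + \<beta> * ln u)"
    using assms by (intro continuous_intros) auto
qed

context RE_setting
begin

lemma G_star_quantile_le_iff:
  assumes "lo + (hi - \<mu>) \<le> t"
  shows "G_star_quantile lo hi \<mu> u \<le> t \<longleftrightarrow> u \<le> exp ((t - hi) / (hi - \<mu>))"
proof (cases "u < exp ((lo - \<mu>) / (hi - \<mu>))")
  case True
  have "exp ((lo - \<mu>) / (hi - \<mu>)) \<le> exp ((t - hi) / (hi - \<mu>))"
    using assms mean_less_hi by (simp add: divide_right_mono)
  then have "u \<le> exp ((t - hi) / (hi - \<mu>))"
    using True by linarith
  then show ?thesis
    using True assms mean_less_hi by (simp add: G_star_quantile_def)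
next
  case False
  then have "0 < u"
    by (smt (verit) exp_gt_zero)
  have "hi + (hi - \<mu>) * ln u \<le> t \<longleftrightarrow> ln u \<le> (t - hi) / (hi - \<mu>)"
    using mean_less_hi by (simp add: field_simps)
  also have "\<dots> \<longleftrightarrow> u \<le> exp ((t - hi) / (hi - \<mu>))"
    using \<open>0 < u\<close> by (metis exp_le_cancel_iff exp_ln)
  finally show ?thesis
    using False by (simp add: G_star_quantile_def)
qed

lemma G_star_quantile_ge:
  assumes "exp ((lo - \<mu>) / (hi - \<mu>)) \<le> u"
  shows "lo + (hi - \<mu>) \<le> G_star_quantile lo hi \<mu> u"
proof -
  have "0 < u"
    using assms by (smt (verit) exp_gt_zero)
  then have "(lo - \<mu>) / (hi - \<mu>) \<le> ln u"
    using assms by (metis exp_le_cancel_iff exp_ln)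
  then have "lo - \<mu> \<le> (hi - \<mu>) * ln u"
    using mean_less_hi by (simp add: pos_divide_le_eq mult.commute)
  then show ?thesis
    using assms by (simp add: G_star_quantile_def)
qed

lemma G_star_quantile_range:
  assumes "u \<le> 1"
  shows "lo \<le> G_star_quantile lo hi \<mu> u \<and> G_star_quantile lo hi \<mu> u \<le> hi"
proof (cases "u < exp ((lo - \<mu>) / (hi - \<mu>))")
  case True
  then show ?thesis
    using lo_less_mean mean_less_hi by (simp add: G_star_quantile_def)
next
  case False
  then have "lo + (hi - \<mu>) \<le> G_star_quantile lo hi \<mu> u"
    by (simp add: G_star_quantile_ge)
  moreover have "G_star_quantile lo hi \<mu> u \<le> hi"
    using G_star_quantile_le_iff[of hi u] assms lo_less_mean by simp
  ultimately show ?thesis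
    using mean_less_hi by simp
qed

lemma G_star_quantile_vimage_above:
  assumes "lo + (hi - \<mu>) \<le> t" "t \<le> hi"
  shows "{0..1} \<inter> G_star_quantile lo hi \<mu> -` {..t} = {0..exp ((t - hi) / (hi - \<mu>))}"
proof -
  have "exp ((t - hi) / (hi - \<mu>)) \<le> 1"
    using assms mean_less_hi by (simp add: divide_nonpos_pos)
  then have "u \<le> 1" if "u \<le> exp ((t - hi) / (hi - \<mu>))" for u
    using that by linarith
  then show ?thesis
    using G_star_quantile_le_iff[OF assms(1)] by auto
qed

lemma G_star_quantile_vimage_below:
  assumes "lo \<le> t" "t < lo + (hi - \<mu>)"
  shows "{0..1} \<inter> G_star_quantile lo hi \<mu> -` {..t} = {0..<exp ((lo - \<mu>) / (hi - \<mu>))}"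
proof -
  have "exp ((lo - \<mu>) / (hi - \<mu>)) < 1"
    using lo_less_mean mean_less_hi by (simp add: divide_neg_pos)
  then have "u \<le> 1" if "u < exp ((lo - \<mu>) / (hi - \<mu>))" for u
    using that by linarith
  moreover have "G_star_quantile lo hi \<mu> u \<le> t \<longleftrightarrow> u < exp ((lo - \<mu>) / (hi - \<mu>))" for u
    using G_star_quantile_ge[of u] assms
    by (cases "u < exp ((lo - \<mu>) / (hi - \<mu>))") (auto simp: G_star_quantile_def)
  ultimately show ?thesis
    by auto
qed

lemma dist_on_G_star_measure: "dist_on (G_star_measure lo hi \<mu>) lo hi"
proof -
  have "{0..1} \<inter> G_star_quantile lo hi \<mu> -` {lo..hi} = {0..1}"
    using G_star_quantile_range by auto
  then have "measure (G_star_measure lo hi \<mu>) {lo..hi} = 1"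
    by (simp add: measure_G_star_measure)
  moreover have "sets (G_star_measure lo hi \<mu>) = sets borel"
    by (simp add: G_star_measure_def)
  ultimately show ?thesis
    using prob_space_G_star_measure by (simp add: dist_on_def)
qed

lemma supported_distribution_G_star_measure: "supported_distribution (G_star_measure lo hi \<mu>) lo hi"
  by unfold_locales (rule dist_on_G_star_measure)

lemma cdf_G_star_measure:
  assumes "lo \<le> t" "t \<le> hi"
  shows "cdf (G_star_measure lo hi \<mu>) t = G_star lo hi \<mu> t"
  using assms G_star_quantile_vimage_above[of t] G_star_quantile_vimage_below[of t]
  by (simp add: cdf_def measure_G_star_measure G_star_def)

lemma cdf_G_star_measure_above:
  assumes "lo + (hi - \<mu>) \<le> t" "t \<le> hi"
  shows "cdf (G_star_measure lo hi \<mu>) t = exp ((t - hi) / (hi - \<mu>))"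
  using cdf_G_star_measure[of t] assms mean_less_hi by (simp add: G_star_def)

lemma truncated_G_star_quantile_eq:
  assumes "lo + (hi - \<mu>) \<le> t" "t \<le> hi"
  defines "p \<equiv> exp ((lo - \<mu>) / (hi - \<mu>))" and "c \<equiv> exp ((t - hi) / (hi - \<mu>))"
  shows "indicator {0..1} u * (indicator {..t} (G_star_quantile lo hi \<mu> u) * G_star_quantile lo hi \<mu> u)
    = indicator {0..<p} u * lo + indicator {p..c} u * (hi + (hi - \<mu>) * ln u)"
proof -
  have "(lo - \<mu>) / (hi - \<mu>) \<le> (t - hi) / (hi - \<mu>)"
    using assms mean_less_hi by (intro divide_right_mono) auto
  then have "0 < p" "p \<le> c"
    by (simp_all add: p_def c_def)
  have "u \<in> {0..1} \<and> G_star_quantile lo hi \<mu> u \<le> t \<longleftrightarrow> u \<in> {0..c}"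
    using G_star_quantile_vimage_above[OF assms(1,2)] unfolding c_def by blast
  moreover have "G_star_quantile lo hi \<mu> u = (if u < p then lo else hi + (hi - \<mu>) * ln u)"
    by (simp add: G_star_quantile_def p_def)
  ultimately show ?thesis
    using \<open>p \<le> c\<close> \<open>0 < p\<close> by (cases "u < p") (auto split: split_indicator)
qed

lemma partial_mean_G_star_measure:
  assumes "lo + (hi - \<mu>) \<le> t" "t \<le> hi"
  shows "(LINT s:{..t}|G_star_measure lo hi \<mu>. s) = exp ((t - hi) / (hi - \<mu>)) * (t - (hi - \<mu>))"
proof -
  define D p c where "D = hi - \<mu>" and "p = exp ((lo - \<mu>) / D)" and "c = exp ((t - hi) / D)"
  have "0 < D" "0 < p"
    using mean_less_hi by (simp_all add: D_def p_def)
  have "(lo - \<mu>) / D \<le> (t - hi) / D"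
    using assms \<open>0 < D\<close> by (intro divide_right_mono) (auto simp: D_def)
  then have "p \<le> c"
    by (simp add: p_def c_def)
  have "(LINT s:{..t}|G_star_measure lo hi \<mu>. s)
      = (LINT u|lborel. indicator {0..<p} u * lo + indicator {p..c} u * (hi + D * ln u))"
    unfolding set_lebesgue_integral_def
    using truncated_G_star_quantile_eq[OF assms, symmetric]
    by (simp add: integral_G_star_measure set_lebesgue_integral_def mult.assoc p_def c_def D_def)
  also have "\<dots> = p * lo + ((hi * c + D * (c * ln c - c)) - (hi * p + D * (p * ln p - p)))"
    using set_integral_affine_ln[OF \<open>0 < p\<close> \<open>p \<le> c\<close>, of hi D]
      set_integrable_affine_ln[OF \<open>0 < p\<close>, of c hi D] \<open>0 < p\<close>
    unfolding set_lebesgue_integral_def set_integrable_def by (subst Bochner_Integration.integral_add) auto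
  also have "\<dots> = p * lo + ((hi * c + (c * (t - hi) - D * c)) - (hi * p + (p * (lo - \<mu>) - D * p)))"
  proof -
    have "D * ln c = t - hi" "D * ln p = lo - \<mu>"
      using \<open>0 < D\<close> by (simp_all add: c_def p_def)
    then have "D * (c * ln c) = c * (t - hi)" "D * (p * ln p) = p * (lo - \<mu>)"
      by (metis mult.left_commute)+
    then show ?thesis
      by (simp add: right_diff_distrib)
  qed
  also have "\<dots> = c * (t - D)"
    by (simp add: D_def algebra_simps)
  finally show ?thesis
    by (simp add: c_def D_def)
qed

lemma integrated_cdf_G_star_measure:
  assumes "lo + (hi - \<mu>) \<le> t" "t \<le> hi"
  shows "integrated_cdf (G_star_measure lo hi \<mu>) t = (hi - \<mu>) * exp ((t - hi) / (hi - \<mu>))"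
proof -
  interpret supported_distribution "G_star_measure lo hi \<mu>" lo hi
    by (rule supported_distribution_G_star_measure)
  show ?thesis
    using cdf_G_star_measure_above[OF assms] integrated_cdf_eq[of t] partial_mean_G_star_measure[OF assms]
    by (simp add: algebra_simps)
qed

lemma RE_feasible_G_star_measure:
  "RE_feasible lo hi \<mu> (G_star_measure lo hi \<mu>) 0 (hi - \<mu>) (lo + (hi - \<mu>))"
proof -
  interpret supported_distribution "G_star_measure lo hi \<mu>" lo hi
    by (rule supported_distribution_G_star_measure)
  let ?G = "G_star_measure lo hi \<mu>" and ?\<tau> = "lo + (hi - \<mu>)"
  have mean: "(LINT s|?G. s) = \<mu>"
    using integrated_cdf_above_support[of hi] integrated_cdf_G_star_measure[of hi] lo_less_mean
    by simp
  have "wHE ?G (hi - \<mu>) ?\<tau>"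
    unfolding wHE_iff
  proof (intro conjI allI impI)
    show "0 < cdf ?G ?\<tau>" "integrated_cdf ?G ?\<tau> = (hi - \<mu>) * cdf ?G ?\<tau>"
      using cdf_G_star_measure_above[of ?\<tau>] integrated_cdf_G_star_measure[of ?\<tau>] lo_less_mean
      by simp_all
    show "(hi - \<mu>) * cdf ?G t \<le> integrated_cdf ?G t" if "?\<tau> < t" for t
    proof (cases "t \<le> hi")
      case True
      then show ?thesis
        using cdf_G_star_measure_above[of t] integrated_cdf_G_star_measure[of t] \<open>?\<tau> < t\<close> by simp
    next
      case False
      then show ?thesis
        using cdf_above_support[of t] integrated_cdf_above_support[of t] mean by simp
    qed
  qed
  moreover have "(LINT s:{\<mu> + (hi - \<mu>)..hi}|?G. s - (\<mu> + (hi - \<mu>))) = (LINT s|?G. 0)"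
    unfolding set_lebesgue_integral_def
    by (rule Bochner_Integration.integral_cong) (auto simp: indicator_def)
  ultimately show ?thesis
    unfolding RE_feasible_def wP_def using dist_on mean by simp
qed

lemma RE_obj_G_star_measure:
  "RE_obj (G_star_measure lo hi \<mu>) 0 (hi - \<mu>) (lo + (hi - \<mu>)) = RE_value"
  using cdf_G_star_measure_above[of "lo + (hi - \<mu>)"] lo_less_mean by (simp add: RE_obj_def)

end

lemma support_bounds_mean:
  assumes "support_bounds F lo hi" "lo < hi"
  shows "lo < (LINT s|F. s)" "(LINT s|F. s) < hi"
proof -
  interpret supported_distribution F lo hi
    using assms(1) by unfold_locales (simp add: support_bounds_def)
  have "0 < (hi - lo) / 2"
    using assms(2) by simp
  then have "0 < measure F {..<lo + (hi - lo) / 2}" "0 < measure F {hi - (hi - lo) / 2<..}"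
    using assms(1) unfolding support_bounds_def by blast+
  moreover have "lo + (hi - lo) / 2 = (lo + hi) / 2" "hi - (hi - lo) / 2 = (lo + hi) / 2"
    by (simp_all add: field_simps)
  ultimately have "0 < measure F {(lo + hi) / 2<..}" "0 < measure F {..<(lo + hi) / 2}"
    by simp_all
  then show "lo < (LINT s|F. s)" "(LINT s|F. s) < hi"
    using lo_less_mean_of_mass[of "(lo + hi) / 2"] mean_less_hi_of_mass[of "(lo + hi) / 2"] assms(2)
    by simp_all
qed

context RE_setting
begin

theorem RE_value_upper_bound:
  assumes "RE_feasible lo hi \<mu> G \<phi>t d \<tau>"
  shows "RE_obj G \<phi>t d \<tau> \<le> RE_value"
proof -
  interpret RE_feasible_point lo hi \<mu> G \<phi>t d \<tau>
    using assms by unfold_locales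
  show ?thesis
    by (rule RE_obj_le_RE_value)
qed

theorem RE_solution_unique:
  assumes "RE_feasible lo hi \<mu> G \<phi>t d \<tau>" "RE_obj G \<phi>t d \<tau> = RE_value"
  shows "\<phi>t = 0 \<and> d = hi - \<mu> \<and> (\<forall>s\<in>{lo..hi}. cdf G s = G_star lo hi \<mu> s)"
proof -
  interpret RE_optimal_point lo hi \<mu> G \<phi>t d \<tau>
    using assms by unfold_locales
  show ?thesis
    using fixed_fee_eq_zero fee_eq cdf_eq_G_star by simp
qed

end

theorem lemma9:
  fixes F :: "real measure" and lo hi \<mu> :: real
  assumes "0 \<le> lo" and "lo < hi"
    and "support_bounds F lo hi"
    and "\<mu> = (LINT x|F. x)"
  shows "(\<forall>G \<phi>t \<phi>d \<tau>. RE_feasible lo hi \<mu> G \<phi>t \<phi>d \<tau> \<longrightarrow>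
            RE_obj G \<phi>t \<phi>d \<tau> \<le> (hi - \<mu>) * (1 - exp ((lo - \<mu>) / (hi - \<mu>))))
    \<and> (\<exists>G \<tau>. RE_feasible lo hi \<mu> G 0 (hi - \<mu>) \<tau>
            \<and> (\<forall>s\<in>{lo..hi}. cdf G s = G_star lo hi \<mu> s)
            \<and> RE_obj G 0 (hi - \<mu>) \<tau> = (hi - \<mu>) * (1 - exp ((lo - \<mu>) / (hi - \<mu>))))
    \<and> (\<forall>G \<phi>t \<phi>d \<tau>. RE_feasible lo hi \<mu> G \<phi>t \<phi>d \<tau> \<and>
            RE_obj G \<phi>t \<phi>d \<tau> = (hi - \<mu>) * (1 - exp ((lo - \<mu>) / (hi - \<mu>))) \<longrightarrow>
            \<phi>t = 0 \<and> \<phi>d = hi - \<mu> \<and> (\<forall>s\<in>{lo..hi}. cdf G s = G_star lo hi \<mu> s))"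
proof -
  interpret RE_setting lo hi \<mu>
    using support_bounds_mean[OF assms(3,2)] assms(4) by unfold_locales simp_all
  have "RE_feasible lo hi \<mu> (G_star_measure lo hi \<mu>) 0 (hi - \<mu>) (lo + (hi - \<mu>))
      \<and> (\<forall>s\<in>{lo..hi}. cdf (G_star_measure lo hi \<mu>) s = G_star lo hi \<mu> s)
      \<and> RE_obj (G_star_measure lo hi \<mu>) 0 (hi - \<mu>) (lo + (hi - \<mu>)) = RE_value"
    using RE_feasible_G_star_measure cdf_G_star_measure RE_obj_G_star_measure by simp
  then show ?thesis
    using RE_value_upper_bound RE_solution_unique by blast
qed

end
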